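(* Let $p\ge2$, $c\in\mathbb R^d$ and $\lambda_1,\dots,\lambda_d>0$. Then the function $H(y)=-\sum_{i=1}^dy_i^{1/p}|c_i|-\sqrt{\sum_{i=1}^d\lambda_i^{-1}y_i^{2/p}}$ is convex on $\mathbb R_+^d$. *)

theory Defs
  imports "HOL-Analysis.Analysis"
begin

end

theory Submission
  imports Defs
begin

text \<open>Since \<open>p \<ge> 2\<close>, both \<open>t \<mapsto> t powr (1/p)\<close> and \<open>t \<mapsto> t powr (2/p)\<close> are concave on \<open>[0, \<infinity>)\<close>.
  Hence both sums in \<open>H\<close> are nonnegative combinations of concave functions of the coordinates
  and so concave, and the square root, being concave and nondecreasing, keeps the second one
  concave. Thus \<open>-H\<close> is concave.\<close>

lemma concave_on_powr_pos:
  assumes "0 < r" "r \<le> 1"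
  shows "concave_on {0<..} (\<lambda>x::real. x powr r)"
proof (rule f''_le0_imp_concave[where f' = "\<lambda>x. r * x powr (r - 1)"
      and f'' = "\<lambda>x. r * ((r - 1) * x powr (r - 1 - 1))"])
  fix x :: real
  assume "x \<in> {0<..}"
  then show "((\<lambda>x. x powr r) has_real_derivative r * x powr (r - 1)) (at x)"
    and "((\<lambda>x. r * x powr (r - 1)) has_real_derivative r * ((r - 1) * x powr (r - 1 - 1))) (at x)"
    by (auto intro!: derivative_eq_intros)
  show "r * ((r - 1) * x powr (r - 1 - 1)) \<le> 0"
    using assms by (intro mult_nonneg_nonpos mult_nonpos_nonneg) auto
qed simp

lemma concave_on_powr:
  assumes "0 < r" "r \<le> 1"
  shows "concave_on {0..} (\<lambda>x::real. x powr r)"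
proof (rule concave_on_linorderI)
  fix t x y :: real
  assume t: "0 < t" "t < 1" and xy: "x \<in> {0..}" "y \<in> {0..}" "x < y"
  show "(1 - t) * x powr r + t * y powr r \<le> ((1 - t) *\<^sub>R x + t *\<^sub>R y) powr r"
  proof (cases "x = 0")
    case True
    have "t = t powr 1"
      using t by simp
    also have "\<dots> \<le> t powr r"
      using assms t by (intro powr_mono') auto
    finally have "t * y powr r \<le> t powr r * y powr r"
      by (simp add: mult_right_mono)
    with True t xy show ?thesis
      by (simp add: powr_mult)
  next
    case False
    with xy have "x \<in> {0<..}" "y \<in> {0<..}"
      by auto
    with t show ?thesis
      using concave_onD[OF concave_on_powr_pos[OF assms]] by simp
  qed
qed simp

lemma concave_on_sqrt: "concave_on {0..} sqrt"
  using concave_on_powr[of "1/2"] by (simp add: concave_on_iff powr_half_sqrt)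

lemma concave_on_sum_fun:
  assumes "finite I" "convex S" "\<And>i. i \<in> I \<Longrightarrow> concave_on S (f i)"
  shows "concave_on S (\<lambda>x. \<Sum>i\<in>I. f i x)"
  using assms by (induction I rule: finite_induct) (auto simp: concave_on_const concave_on_add)

lemma concave_on_compose_linear:
  assumes "linear g" "convex S" "g ` S \<subseteq> T" "concave_on T f"
  shows "concave_on S (\<lambda>x. f (g x))"
proof -
  have "g (u *\<^sub>R x + v *\<^sub>R y) = u *\<^sub>R g x + v *\<^sub>R g y" for u v x y
    using \<open>linear g\<close> by (simp add: linear_add linear_scale)
  with assms show ?thesis
    unfolding concave_on_iff by (auto simp: image_subset_iff)
qed

lemma concave_on_compose_mono:
  assumes "concave_on S f" "f ` S \<subseteq> T" "concave_on T g" "mono_on T g"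
  shows "concave_on S (\<lambda>x. g (f x))"
  unfolding concave_on_iff
proof (intro conjI ballI allI impI)
  show "convex S"
    using assms(1) by (rule concave_on_imp_convex)
  fix x y and u v :: real
  assume xy: "x \<in> S" "y \<in> S" and uv: "0 \<le> u" "0 \<le> v" "u + v = 1"
  have in_T: "f x \<in> T" "f y \<in> T" "f (u *\<^sub>R x + v *\<^sub>R y) \<in> T"
    using assms(2) xy uv \<open>convex S\<close> by (auto simp: convex_def)
  then have "u *\<^sub>R f x + v *\<^sub>R f y \<in> T"
    using concave_on_imp_convex[OF assms(3)] uv by (simp add: convex_def)
  have "u * g (f x) + v * g (f y) \<le> g (u * f x + v * f y)"
    using assms(3) in_T uv by (auto simp: concave_on_iff)
  also have "\<dots> \<le> g (f (u *\<^sub>R x + v *\<^sub>R y))"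
    using assms(1,4) xy uv in_T \<open>u *\<^sub>R f x + v *\<^sub>R f y \<in> T\<close>
    by (intro mono_onD[of T g]) (auto simp: concave_on_iff)
  finally show "u * g (f x) + v * g (f y) \<le> g (f (u *\<^sub>R x + v *\<^sub>R y))" .
qed

lemma concave_on_nonneg_orthant_coordinate:
  assumes "concave_on {0..} f"
  shows "concave_on {y :: real ^ 'n. \<forall>i. y $ i \<ge> 0} (\<lambda>y. f (y $ i))"
  by (rule concave_on_compose_linear[OF _ _ _ assms])
     (auto simp: convex_def bounded_linear.linear[OF bounded_linear_vec_nth])

theorem proposition9:
  fixes p :: real and c :: "real ^ 'd" and lam :: "real ^ 'd"
  assumes "p \<ge> 2"
    and "\<And>i. lam $ i > 0"
  shows "convex_on {y :: real ^ 'd. \<forall>i. y $ i \<ge> 0}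
           (\<lambda>y. - (\<Sum>i\<in>UNIV. (y $ i) powr (1 / p) * \<bar>c $ i\<bar>)
                - sqrt (\<Sum>i\<in>UNIV. (y $ i) powr (2 / p) / lam $ i))"
proof -
  let ?S = "{y :: real ^ 'd. \<forall>i. y $ i \<ge> 0}"
  have "convex ?S"
    by (auto simp: convex_def)
  have exponents: "0 < 1 / p" "1 / p \<le> 1" "0 < 2 / p" "2 / p \<le> 1"
    using assms(1) by auto
  have coordinate_powr: "concave_on ?S (\<lambda>y. (y $ i) powr r)" if "0 < r" "r \<le> 1" for r i
    using concave_on_nonneg_orthant_coordinate[OF concave_on_powr[OF that]] .
  have first_sum: "concave_on ?S (\<lambda>y. \<Sum>i\<in>UNIV. (y $ i) powr (1 / p) * \<bar>c $ i\<bar>)"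
    using concave_on_cmul[OF abs_ge_zero coordinate_powr[OF exponents(1,2)]]
    by (intro concave_on_sum_fun[OF _ \<open>convex ?S\<close>]) (auto simp: mult.commute)
  have root_of_second_sum: "concave_on ?S (\<lambda>y. sqrt (\<Sum>i\<in>UNIV. (y $ i) powr (2 / p) / lam $ i))"
  proof (rule concave_on_compose_mono[OF _ _ concave_on_sqrt])
    show "concave_on ?S (\<lambda>y. \<Sum>i\<in>UNIV. (y $ i) powr (2 / p) / lam $ i)"
      using assms(2) by (intro concave_on_sum_fun[OF _ \<open>convex ?S\<close>] concave_on_cdiv
          coordinate_powr[OF exponents(3,4)] less_imp_le) auto
    show "(\<lambda>y. \<Sum>i\<in>UNIV. (y $ i) powr (2 / p) / lam $ i) ` ?S \<subseteq> {0..}"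
      using assms(2) by (auto intro!: sum_nonneg divide_nonneg_pos)
  qed (auto intro: mono_onI)
  show ?thesis
    using convex_on_diff[OF first_sum[unfolded concave_on_def] root_of_second_sum] .
qed

end
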